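(* If $\dim\mathcal H=\dim\mathcal J=\infty$, then $\sup\{\|D\|_\wedge: D\in\hat{\mathcal S}(\mathcal H\otimes\mathcal J)\}=+\infty$; consequently the Hermitian projective norm $\|\cdot\|_{\wedge,sa}$ is also unbounded on $\hat{\mathcal S}(\mathcal H\otimes\mathcal J)$.
   Context: $\mathcal H,\mathcal J$ separable complex Hilbert spaces; $\mathcal T(\cdot)$ trace class, trace norm $\|\cdot\|_1$. A standard decomposition of $C\in\mathcal T(\mathcal H\otimes\mathcal J)$ is $C=\sum_k r_kX_k\otimes Y_k$ (trace-norm convergent), $r_k\ge0$, $\sum r_k<\infty$, $\|X_k\|_1\|Y_k\|_1=1$; the cross trace class is the set of $C$ admitting one; $\|C\|_\wedge=\inf\sum r_k$ (projective norm); $\|C\|_{\wedge,sa}$ is the same infimum restricted to decompositions with selfadjoint $X_k,Y_k$ (for selfadjoint $C$), and satisfies $\|C\|_{\wedge,sa}\ge\|C\|_\wedge$. $\hat{\mathcal S}(\mathcal H\otimes\mathcal J)$ (cross states) is the set of density operators on $\mathcal H\otimes\mathcal J$ belonging to the cross trace class. *)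

theory Defs
  imports "HOL-Analysis.Analysis"
begin

text \<open>Concrete model: a separable Hilbert space with orthonormal basis indexed by a
countable type 'i is l2('i). Operators are represented by their matrices
'i \<Rightarrow> 'i \<Rightarrow> complex with respect to this basis.\<close>

type_synonym 'i mat = "'i \<Rightarrow> 'i \<Rightarrow> complex"

definition contraction_on :: "'i set \<Rightarrow> 'i mat \<Rightarrow> bool" where
  "contraction_on F b \<longleftrightarrow>
     (\<forall>i j. (i \<notin> F \<or> j \<notin> F) \<longrightarrow> b i j = 0) \<and>
     (\<forall>x. (\<Sum>i\<in>F. (cmod (\<Sum>j\<in>F. b i j * x j))^2) \<le> (\<Sum>j\<in>F. (cmod (x j))^2))"

text \<open>Trace norm by duality: sup of |tr(AB)| over finite-rank contractions B.\<close>
definition tn_set :: "'i mat \<Rightarrow> real set" where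
  "tn_set a = {cmod (\<Sum>i\<in>F. \<Sum>j\<in>F. a i j * b j i) | F b. finite F \<and> contraction_on F b}"

definition trace_class :: "'i mat \<Rightarrow> bool" where
  "trace_class a \<longleftrightarrow> bdd_above (tn_set a)"

definition trace_norm :: "'i mat \<Rightarrow> real" where
  "trace_norm a = Sup (tn_set a)"

definition selfadj :: "'i mat \<Rightarrow> bool" where
  "selfadj a \<longleftrightarrow> (\<forall>i j. a j i = cnj (a i j))"

definition density :: "'i mat \<Rightarrow> bool" where
  "density a \<longleftrightarrow> trace_class a \<and>
     (\<forall>F x. finite F \<longrightarrow>
        Im (\<Sum>i\<in>F. \<Sum>j\<in>F. cnj (x i) * a i j * x j) = 0 \<and>
        0 \<le> Re (\<Sum>i\<in>F. \<Sum>j\<in>F. cnj (x i) * a i j * x j)) \<and>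
     ((\<lambda>i. a i i) has_sum 1) UNIV"

definition tensor :: "'a mat \<Rightarrow> 'b mat \<Rightarrow> ('a \<times> 'b) mat" where
  "tensor X Y = (\<lambda>(i, k) (i', k'). X i i' * Y k k')"

definition std_decomp :: "('a \<times> 'b) mat \<Rightarrow> (nat \<Rightarrow> real) \<Rightarrow> (nat \<Rightarrow> 'a mat) \<Rightarrow> (nat \<Rightarrow> 'b mat) \<Rightarrow> bool" where
  "std_decomp C r X Y \<longleftrightarrow>
     (\<forall>k. 0 \<le> r k) \<and> summable r \<and>
     (\<forall>k. trace_class (X k) \<and> trace_class (Y k) \<and> trace_norm (X k) * trace_norm (Y k) = 1) \<and>
     (\<lambda>n. trace_norm (\<lambda>p q. C p q - (\<Sum>k<n. complex_of_real (r k) * tensor (X k) (Y k) p q)))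
        \<longlonglongrightarrow> 0"

definition cross_trace_class :: "('a \<times> 'b) mat \<Rightarrow> bool" where
  "cross_trace_class C \<longleftrightarrow> trace_class C \<and> (\<exists>r X Y. std_decomp C r X Y)"

definition proj_norm :: "('a \<times> 'b) mat \<Rightarrow> ereal" where
  "proj_norm C = Inf {ereal (suminf r) | r X Y. std_decomp C r X Y}"

definition proj_norm_sa :: "('a \<times> 'b) mat \<Rightarrow> ereal" where
  "proj_norm_sa C = Inf {ereal (suminf r) | r X Y. std_decomp C r X Y \<and>
                          (\<forall>k. selfadj (X k) \<and> selfadj (Y k))}"

definition cross_states :: "('a \<times> 'b) mat set" where
  "cross_states = {D. density D \<and> cross_trace_class D}"

end

theory Submission
  imports Defs
begin

text \<open>Let \<open>\<tau>\<close> be injective on an \<open>n\<close>-element set \<open>F\<close> and \<open>\<psi> = n^(-1/2) \<Sum>\<^sub>i\<^sub>\<in>\<^sub>F e\<^sub>i \<otimes> e\<^sub>\<tau>\<^sub>i\<close>.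
  The maximally entangled state \<open>\<rho> = |\<psi>\<rangle>\<langle>\<psi>|\<close> is a cross state, being the finite sum of the \<open>n^2\<close>
  elementary tensors \<open>(1/n) E(i,j) \<otimes> E(\<tau> i, \<tau> j)\<close>, yet its projective norm is at least \<open>n\<close>.
  To see this, pair with \<open>W = n \<rho>\<close>. Since \<open>\<rho>\<close> is a contraction, \<open>|tr(C W)| \<le> n |C|\<^sub>1\<close>; compressing \<open>W\<close>
  by unit vectors of the first factor leaves a rank-one contraction of the second, so
  \<open>|tr((X \<otimes> Y) W)| \<le> |X|\<^sub>1 |Y|\<^sub>1\<close>; and \<open>tr(\<rho> W) = n\<close>. Pairing the partial sums of a standard
  decomposition \<open>\<Sum> r\<^sub>k X\<^sub>k \<otimes> Y\<^sub>k\<close> of \<open>\<rho>\<close> with \<open>W\<close> and passing to the limit gives \<open>n \<le> \<Sum> r\<^sub>k\<close>.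
  The Hermitian projective norm is an infimum over fewer decompositions, hence unbounded as well.\<close>

definition sqnorm_on :: "'i set \<Rightarrow> ('i \<Rightarrow> complex) \<Rightarrow> real" where
  "sqnorm_on F x = (\<Sum>i\<in>F. (cmod (x i))^2)"

definition tr_prod :: "'i set \<Rightarrow> 'i mat \<Rightarrow> 'i mat \<Rightarrow> complex" where
  "tr_prod F a b = (\<Sum>i\<in>F. \<Sum>j\<in>F. a i j * b j i)"

lemma sqnorm_on_nonneg: "0 \<le> sqnorm_on F x"
  unfolding sqnorm_on_def by (simp add: sum_nonneg)

lemma zero_in_tn_set: "0 \<in> tn_set a"
proof -
  have "contraction_on {} (\<lambda>i j. 0)"
    unfolding contraction_on_def by simp
  then show ?thesis
    unfolding tn_set_def by force
qed

lemma norm_tr_prod_le_trace_norm: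
  assumes "finite F" "contraction_on F b" "trace_class a"
  shows "cmod (tr_prod F a b) \<le> trace_norm a"
proof -
  have "cmod (tr_prod F a b) \<in> tn_set a"
    unfolding tn_set_def tr_prod_def using assms(1,2) by blast
  then show ?thesis
    using assms(3) unfolding trace_class_def trace_norm_def by (simp add: cSup_upper)
qed

lemma trace_norm_nonneg: "trace_class a \<Longrightarrow> 0 \<le> trace_norm a"
  unfolding trace_class_def trace_norm_def using zero_in_tn_set by (meson cSup_upper)

lemma trace_class_and_trace_norm_le:
  assumes "\<And>F b. finite F \<Longrightarrow> contraction_on F b \<Longrightarrow> cmod (tr_prod F a b) \<le> B"
  shows "trace_class a" "trace_norm a \<le> B"
proof -
  have bound: "\<forall>y\<in>tn_set a. y \<le> B"
    unfolding tn_set_def using assms unfolding tr_prod_def by auto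
  then show "trace_class a"
    unfolding trace_class_def by (meson bdd_above.I)
  show "trace_norm a \<le> B"
    unfolding trace_norm_def using zero_in_tn_set bound by (metis cSup_least empty_iff)
qed

lemma cauchy_schwarz_complex_sum:
  assumes "finite A"
  shows "(cmod (\<Sum>i\<in>A. a i * b i))^2 \<le> sqnorm_on A a * sqnorm_on A b"
proof -
  have "cmod (\<Sum>i\<in>A. a i * b i) \<le> (\<Sum>i\<in>A. cmod (a i) * cmod (b i))"
    by (metis (no_types, lifting) norm_mult norm_sum sum.cong)
  then have "(cmod (\<Sum>i\<in>A. a i * b i))^2 \<le> (\<Sum>i\<in>A. cmod (a i) * cmod (b i))^2"
    by (simp add: power_mono)
  also have "\<dots> \<le> sqnorm_on A a * sqnorm_on A b"
    unfolding sqnorm_on_def by (rule Cauchy_Schwarz_ineq_sum)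
  finally show ?thesis .
qed

lemma contraction_on_norm_entry_le:
  assumes "contraction_on F b" and fin: "finite F"
  shows "cmod (b i j) \<le> 1"
proof (cases "i \<in> F \<and> j \<in> F")
  case False
  then show ?thesis using assms unfolding contraction_on_def by auto
next
  case True
  define x where "x = (\<lambda>l. if l = j then (1::complex) else 0)"
  have "(\<Sum>i\<in>F. (cmod (\<Sum>l\<in>F. b i l * x l))^2) \<le> (\<Sum>l\<in>F. (cmod (x l))^2)"
    using assms unfolding contraction_on_def by blast
  moreover have "(\<Sum>l\<in>F. (cmod (x l))^2) = (\<Sum>l\<in>F. if l = j then 1 else 0)"
    unfolding x_def by (rule sum.cong) auto
  moreover have "(\<Sum>l\<in>F. if l = j then 1 else (0::real)) = 1"
    using True fin by simp
  moreover have "\<And>i. (\<Sum>l\<in>F. b i l * x l) = b i j"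
    using True fin unfolding x_def by (simp add: if_distrib cong: if_cong)
  ultimately have "(\<Sum>i\<in>F. (cmod (b i j))^2) \<le> 1" by simp
  moreover have "(cmod (b i j))^2 \<le> (\<Sum>i\<in>F. (cmod (b i j))^2)"
    using True fin by (intro member_le_sum) auto
  ultimately have "(cmod (b i j))^2 \<le> 1" by linarith
  then show ?thesis by (simp add: power_le_one_iff abs_le_square_iff)
qed

lemma contraction_on_mono:
  assumes "contraction_on F b" "F \<subseteq> G" "finite G"
  shows "contraction_on G b"
  unfolding contraction_on_def
proof (intro conjI allI impI)
  have supp: "\<And>i j. i \<notin> F \<or> j \<notin> F \<Longrightarrow> b i j = 0"
    using assms(1) unfolding contraction_on_def by auto
  then show "b i j = 0" if "i \<notin> G \<or> j \<notin> G" for i j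
    using assms(2) that by auto
  fix x
  have "(\<Sum>i\<in>G. (cmod (\<Sum>j\<in>G. b i j * x j))^2) = (\<Sum>i\<in>G. (cmod (\<Sum>j\<in>F. b i j * x j))^2)"
    by (rule sum.cong[OF refl], subst sum.mono_neutral_left[of G F]) (use assms supp in auto)
  also have "\<dots> = (\<Sum>i\<in>F. (cmod (\<Sum>j\<in>F. b i j * x j))^2)"
    by (rule sum.mono_neutral_right) (use assms supp in auto)
  also have "\<dots> \<le> (\<Sum>j\<in>F. (cmod (x j))^2)"
    using assms(1) unfolding contraction_on_def by blast
  also have "\<dots> \<le> (\<Sum>j\<in>G. (cmod (x j))^2)"
    by (rule sum_mono2) (use assms in auto)
  finally show "(\<Sum>i\<in>G. (cmod (\<Sum>j\<in>G. b i j * x j))^2) \<le> (\<Sum>j\<in>G. (cmod (x j))^2)" .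
qed

lemma tr_prod_add: "tr_prod F (\<lambda>p q. a p q + b p q) c = tr_prod F a c + tr_prod F b c"
  unfolding tr_prod_def by (simp add: distrib_right sum.distrib)

lemma tr_prod_diff: "tr_prod F (\<lambda>p q. a p q - b p q) c = tr_prod F a c - tr_prod F b c"
  unfolding tr_prod_def by (simp add: left_diff_distrib sum_subtractf)

lemma tr_prod_scale_left: "tr_prod F (\<lambda>p q. k * a p q) c = k * tr_prod F a c"
  unfolding tr_prod_def by (simp add: sum_distrib_left mult.assoc)

lemma tr_prod_scale_right: "tr_prod F a (\<lambda>p q. k * c p q) = k * tr_prod F a c"
  unfolding tr_prod_def by (simp add: sum_distrib_left mult.assoc mult.left_commute)

lemma tr_prod_zero: "tr_prod F (\<lambda>p q. 0) c = 0"
  unfolding tr_prod_def by simp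

lemma tr_prod_sum: "tr_prod F (\<lambda>p q. \<Sum>k<(N::nat). t k p q) c = (\<Sum>k<N. tr_prod F (t k) c)"
  by (induction N) (simp_all add: tr_prod_zero tr_prod_add)

lemma trace_class_add:
  fixes a b :: "'i mat"
  assumes "trace_class a" "trace_class b"
  shows "trace_class (\<lambda>p q. a p q + b p q)"
proof (rule trace_class_and_trace_norm_le(1))
  fix F :: "'i set" and c :: "'i mat" assume "finite F" "contraction_on F c"
  then have "cmod (tr_prod F a c) \<le> trace_norm a" "cmod (tr_prod F b c) \<le> trace_norm b"
    using norm_tr_prod_le_trace_norm assms by blast+
  then show "cmod (tr_prod F (\<lambda>p q. a p q + b p q) c) \<le> trace_norm a + trace_norm b"
    unfolding tr_prod_add by (meson add_mono norm_triangle_ineq order_trans)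
qed

lemma trace_class_scale:
  fixes a :: "'i mat"
  assumes "trace_class a"
  shows "trace_class (\<lambda>p q. k * a p q)"
proof (rule trace_class_and_trace_norm_le(1))
  fix F :: "'i set" and c :: "'i mat" assume "finite F" "contraction_on F c"
  then have "cmod (tr_prod F a c) \<le> trace_norm a"
    using norm_tr_prod_le_trace_norm assms by blast
  then show "cmod (tr_prod F (\<lambda>p q. k * a p q) c) \<le> cmod k * trace_norm a"
    unfolding tr_prod_scale_left by (simp add: mult_left_mono norm_mult)
qed

lemma trace_class_diff:
  fixes a b :: "'i mat"
  assumes "trace_class a" "trace_class b"
  shows "trace_class (\<lambda>p q. a p q - b p q)"
  using trace_class_add[OF assms(1) trace_class_scale[OF assms(2), of "-1"]] by simp

lemma trace_class_zero: "trace_class (\<lambda>p q. 0)"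
  by (rule trace_class_and_trace_norm_le(1)[where B=0]) (simp add: tr_prod_zero)

lemma trace_norm_zero: "trace_norm (\<lambda>p q. 0) = 0"
proof -
  have "trace_norm (\<lambda>p q. 0) \<le> 0"
    by (rule trace_class_and_trace_norm_le(2)) (simp add: tr_prod_zero)
  then show ?thesis
    using trace_norm_nonneg[OF trace_class_zero] by (metis antisym)
qed

lemma trace_class_sum:
  fixes t :: "nat \<Rightarrow> 'i mat"
  assumes "\<And>k. trace_class (t k)"
  shows "trace_class (\<lambda>p q. \<Sum>k<(N::nat). c k * t k p q)"
proof (induction N)
  case 0
  then show ?case by (simp add: trace_class_zero)
next
  case (Suc N)
  have "trace_class (\<lambda>p q. (\<Sum>k<N. c k * t k p q) + c N * t N p q)"
    by (rule trace_class_add[OF Suc trace_class_scale[OF assms]])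
  then show ?case by simp
qed

lemma trace_class_finite_support:
  fixes a :: "'i mat"
  assumes fG: "finite G" and supp: "\<And>p q. p \<notin> G \<or> q \<notin> G \<Longrightarrow> a p q = 0"
  shows "trace_class a"
proof (rule trace_class_and_trace_norm_le(1))
  fix F :: "'i set" and b :: "'i mat" assume fF: "finite F" and cb: "contraction_on F b"
  have "cmod (tr_prod F a b) \<le> (\<Sum>p\<in>F. \<Sum>q\<in>F. cmod (a p q * b q p))"
    unfolding tr_prod_def by (rule order_trans[OF norm_sum], rule sum_mono, rule norm_sum)
  also have "\<dots> \<le> (\<Sum>p\<in>F. \<Sum>q\<in>F. cmod (a p q))"
    using contraction_on_norm_entry_le[OF cb fF]
    by (intro sum_mono) (simp add: norm_mult mult_left_le)
  also have "\<dots> = (\<Sum>p\<in>F \<inter> G. \<Sum>q\<in>F \<inter> G. cmod (a p q))"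
  proof -
    have "(\<Sum>q\<in>F. cmod (a p q)) = (\<Sum>q\<in>F \<inter> G. cmod (a p q))" for p
      by (rule sum.mono_neutral_right) (use fF supp in auto)
    moreover have "(\<Sum>p\<in>F. \<Sum>q\<in>F \<inter> G. cmod (a p q)) = (\<Sum>p\<in>F \<inter> G. \<Sum>q\<in>F \<inter> G. cmod (a p q))"
      by (rule sum.mono_neutral_right) (use fF supp in auto)
    ultimately show ?thesis by simp
  qed
  also have "\<dots> \<le> (\<Sum>p\<in>G. \<Sum>q\<in>G. cmod (a p q))"
    using fG by (intro order_trans[OF sum_mono sum_mono2] sum_mono2) (auto intro: sum_nonneg)
  finally show "cmod (tr_prod F a b) \<le> (\<Sum>p\<in>G. \<Sum>q\<in>G. cmod (a p q))" .
qed

lemma norm_tr_prod_le_op_bound: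
  assumes fF: "finite F" and supp: "\<And>i j. i \<notin> F \<or> j \<notin> F \<Longrightarrow> c i j = 0"
    and M: "M > 0"
    and op: "\<And>x. (\<Sum>i\<in>F. (cmod (\<Sum>j\<in>F. c i j * x j))^2) \<le> M^2 * (\<Sum>j\<in>F. (cmod (x j))^2)"
    and tc: "trace_class a"
  shows "cmod (tr_prod F a c) \<le> M * trace_norm a"
proof -
  define b where "b = (\<lambda>i j. c i j / complex_of_real M)"
  have cb: "contraction_on F b"
    unfolding contraction_on_def
  proof (intro conjI allI impI)
    fix i j assume "i \<notin> F \<or> j \<notin> F"
    then show "b i j = 0" unfolding b_def using supp by simp
  next
    fix x
    have "(\<Sum>i\<in>F. (cmod (\<Sum>j\<in>F. b i j * x j))^2) = (\<Sum>i\<in>F. (cmod (\<Sum>j\<in>F. c i j * x j))^2) / M^2"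
      unfolding b_def
      by (simp add: sum_divide_distrib[symmetric] norm_divide power_divide times_divide_eq_left
            del: of_real_power)
    also have "\<dots> \<le> (\<Sum>j\<in>F. (cmod (x j))^2)"
      using op[of x] M by (simp add: divide_le_eq mult.commute)
    finally show "(\<Sum>i\<in>F. (cmod (\<Sum>j\<in>F. b i j * x j))^2) \<le> (\<Sum>j\<in>F. (cmod (x j))^2)" .
  qed
  have "c = (\<lambda>i j. complex_of_real M * b i j)"
    unfolding b_def using M by (auto simp: fun_eq_iff)
  then have "tr_prod F a c = complex_of_real M * tr_prod F a b"
    using tr_prod_scale_right by metis
  then show ?thesis
    using norm_tr_prod_le_trace_norm[OF fF cb tc] M by (simp add: norm_mult)
qed

lemma op_bound_of_bilinear_bound:
  assumes fG: "finite G" and M: "M \<ge> 0"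
    and bil: "\<And>u v. sqnorm_on G u \<le> 1 \<Longrightarrow> sqnorm_on G v \<le> 1 \<Longrightarrow>
               cmod (\<Sum>i\<in>G. \<Sum>j\<in>G. cnj (u i) * c i j * v j) \<le> M"
  shows "(\<Sum>i\<in>G. (cmod (\<Sum>j\<in>G. c i j * x j))^2) \<le> M^2 * (\<Sum>j\<in>G. (cmod (x j))^2)"
proof -
  define y where "y = (\<lambda>i. \<Sum>j\<in>G. c i j * x j)"
  define A where "A = sqrt (sqnorm_on G y)"
  define B where "B = sqrt (sqnorm_on G x)"
  have A2: "A^2 = sqnorm_on G y" and B2: "B^2 = sqnorm_on G x"
    unfolding A_def B_def by (simp_all add: sqnorm_on_nonneg)
  have A0: "A \<ge> 0" "B \<ge> 0"
    unfolding A_def B_def by (auto simp: sqnorm_on_nonneg)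
  have goal: "sqnorm_on G y \<le> M^2 * sqnorm_on G x \<Longrightarrow> ?thesis"
    unfolding sqnorm_on_def y_def by simp
  consider "A = 0" | "B = 0" | "A > 0" "B > 0"
    using A0 by linarith
  then show ?thesis
  proof cases
    case 1
    then show ?thesis using A2 M sqnorm_on_nonneg[of G x] by (intro goal) simp
  next
    case 2
    then have "\<forall>j\<in>G. x j = 0"
      using B2 fG unfolding sqnorm_on_def by (simp add: sum_nonneg_eq_0_iff)
    then have "sqnorm_on G y = 0"
      unfolding sqnorm_on_def y_def by simp
    then show ?thesis using sqnorm_on_nonneg[of G x] by (intro goal) simp
  next
    case 3
    define u where "u = (\<lambda>i. y i / complex_of_real A)"
    define v where "v = (\<lambda>i. x i / complex_of_real B)"
    have "sqnorm_on G u = sqnorm_on G y / A^2" "sqnorm_on G v = sqnorm_on G x / B^2"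
      unfolding sqnorm_on_def u_def v_def
      by (simp_all add: norm_divide power_divide sum_divide_distrib)
    then have unit: "sqnorm_on G u = 1" "sqnorm_on G v = 1"
      using 3 by (simp_all flip: A2 B2)
    \<comment> \<open>testing with the normalised image vector \<open>u = c x / \<parallel>c x\<parallel>\<close> turns the bilinear form into \<open>\<parallel>c x\<parallel> / \<parallel>x\<parallel>\<close>\<close>
    have "(\<Sum>i\<in>G. \<Sum>j\<in>G. cnj (y i) * c i j * x j) = (\<Sum>i\<in>G. cnj (y i) * y i)"
      unfolding y_def by (simp add: sum_distrib_left mult.assoc)
    also have "\<dots> = complex_of_real (A^2)"
      unfolding A2 sqnorm_on_def of_real_sum
      by (rule sum.cong[OF refl]) (metis complex_norm_square mult.commute)
    finally have yx: "(\<Sum>i\<in>G. \<Sum>j\<in>G. cnj (y i) * c i j * x j) = complex_of_real (A^2)" .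
    have "(\<Sum>i\<in>G. \<Sum>j\<in>G. cnj (u i) * c i j * v j)
        = (\<Sum>i\<in>G. \<Sum>j\<in>G. cnj (y i) * c i j * x j) / complex_of_real (A * B)"
      unfolding u_def v_def by (simp add: sum_divide_distrib)
    also have "\<dots> = complex_of_real (A / B)"
      unfolding yx using 3 by (simp add: power2_eq_square)
    finally have "A / B \<le> M"
      using bil[of u v] unit 3 by (simp add: norm_divide)
    then have "A \<le> M * B" using 3 by (simp add: divide_le_eq)
    then have "A^2 \<le> (M * B)^2" using 3 by (simp add: power_mono)
    then show ?thesis using A2 B2 by (intro goal) (simp add: power_mult_distrib)
  qed
qed

lemma contraction_on_compression:
  fixes b :: "('a \<times> 'b) mat"
  assumes f1: "finite F1" and f2: "finite F2" and cb: "contraction_on (F1 \<times> F2) b"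
    and nu: "sqnorm_on F1 u \<le> 1" and nv: "sqnorm_on F1 v \<le> 1"
  shows "contraction_on F2 (\<lambda>k' k. \<Sum>i'\<in>F1. \<Sum>i\<in>F1. cnj (u i') * b (i',k') (i,k) * v i)"
  unfolding contraction_on_def
proof (intro conjI allI impI)
  fix k' k :: 'b assume "k' \<notin> F2 \<or> k \<notin> F2"
  then have "\<And>i' i. b (i',k') (i,k) = 0" using cb unfolding contraction_on_def by auto
  then show "(\<Sum>i'\<in>F1. \<Sum>i\<in>F1. cnj (u i') * b (i',k') (i,k) * v i) = 0" by simp
next
  fix x :: "'b \<Rightarrow> complex"
  define G where "G = F1 \<times> F2"
  define z where "z = (\<lambda>(i,k). v i * x k)"
  define w where "w = (\<lambda>p. \<Sum>q\<in>G. b p q * z q)"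
  \<comment> \<open>the compression applied to \<open>x\<close> is \<open>u\<^sup>* \<otimes> 1\<close> applied to \<open>b (v \<otimes> x)\<close>\<close>
  have factor: "(\<Sum>k\<in>F2. (\<Sum>i'\<in>F1. \<Sum>i\<in>F1. cnj (u i') * b (i',k') (i,k) * v i) * x k)
        = (\<Sum>i'\<in>F1. cnj (u i') * w (i',k'))" for k'
  proof -
    have "(\<Sum>k\<in>F2. (\<Sum>i'\<in>F1. \<Sum>i\<in>F1. cnj (u i') * b (i',k') (i,k) * v i) * x k)
        = (\<Sum>k\<in>F2. \<Sum>i'\<in>F1. \<Sum>i\<in>F1. cnj (u i') * (b (i',k') (i,k) * (v i * x k)))"
      by (simp add: sum_distrib_right sum_distrib_left mult_ac)
    also have "\<dots> = (\<Sum>i'\<in>F1. \<Sum>i\<in>F1. \<Sum>k\<in>F2. cnj (u i') * (b (i',k') (i,k) * (v i * x k)))"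
      by (subst sum.swap) (rule sum.cong[OF refl], rule sum.swap)
    also have "\<dots> = (\<Sum>i'\<in>F1. cnj (u i') * w (i',k'))"
      unfolding w_def G_def z_def sum.cartesian_product' by (simp add: sum_distrib_left)
    finally show ?thesis .
  qed
  have row: "(cmod (\<Sum>i'\<in>F1. cnj (u i') * w (i',k')))^2 \<le> (\<Sum>i'\<in>F1. (cmod (w (i',k')))^2)" for k'
  proof -
    have "(cmod (\<Sum>i'\<in>F1. cnj (u i') * w (i',k')))^2
        \<le> sqnorm_on F1 (\<lambda>i'. cnj (u i')) * sqnorm_on F1 (\<lambda>i'. w (i',k'))"
      by (rule cauchy_schwarz_complex_sum[OF f1])
    also have "\<dots> \<le> sqnorm_on F1 (\<lambda>i'. w (i',k'))"
      using nu sqnorm_on_nonneg[of F1 "\<lambda>i'. w (i',k')"]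
      by (simp add: sqnorm_on_def mult_left_le_one_le sum_nonneg)
    finally show ?thesis unfolding sqnorm_on_def .
  qed
  have "(\<Sum>k'\<in>F2. (cmod (\<Sum>k\<in>F2. (\<Sum>i'\<in>F1. \<Sum>i\<in>F1. cnj (u i') * b (i',k') (i,k) * v i) * x k))^2)
      \<le> (\<Sum>k'\<in>F2. \<Sum>i'\<in>F1. (cmod (w (i',k')))^2)"
    unfolding factor by (rule sum_mono) (rule row)
  also have "\<dots> = (\<Sum>p\<in>G. (cmod (w p))^2)"
    unfolding G_def sum.cartesian_product' by (rule sum.swap)
  also have "\<dots> \<le> (\<Sum>q\<in>G. (cmod (z q))^2)"
    using cb unfolding contraction_on_def w_def G_def by blast
  also have "\<dots> = sqnorm_on F1 v * sqnorm_on F2 x"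
    unfolding G_def sum.cartesian_product' z_def sqnorm_on_def
    by (simp add: norm_mult power_mult_distrib sum_product)
  also have "\<dots> \<le> sqnorm_on F2 x"
    using nv sqnorm_on_nonneg[of F2 x] sqnorm_on_nonneg[of F1 v] by (simp add: mult_left_le_one_le)
  finally show "(\<Sum>k'\<in>F2. (cmod (\<Sum>k\<in>F2. (\<Sum>i'\<in>F1. \<Sum>i\<in>F1. cnj (u i') * b (i',k') (i,k) * v i) * x k))^2)
      \<le> (\<Sum>k\<in>F2. (cmod (x k))^2)" unfolding sqnorm_on_def .
qed

text \<open>Pairing \<open>X \<otimes> Y\<close> with \<open>W\<close> amounts to pairing \<open>X\<close> with the partial trace \<open>c = tr\<^sub>2((1 \<otimes> Y) W)\<close>.
  The bilinear form of \<open>c\<close> at \<open>(u, v)\<close> is the pairing of \<open>Y\<close> with the compression of \<open>W\<close> by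
  \<open>(u, v)\<close>, so if those compressions are contractions then \<open>c\<close> has operator norm at most \<open>\<parallel>Y\<parallel>\<^sub>1\<close>.\<close>

lemma norm_tr_prod_tensor_le:
  fixes X :: "'a mat" and Y :: "'b mat" and W :: "('a \<times> 'b) mat"
  assumes f1: "finite F1" and f2: "finite F2"
    and suppW: "\<And>p q. p \<notin> F1 \<times> F2 \<or> q \<notin> F1 \<times> F2 \<Longrightarrow> W p q = 0"
    and compr: "\<And>u v. sqnorm_on F1 u \<le> 1 \<Longrightarrow> sqnorm_on F1 v \<le> 1 \<Longrightarrow>
       contraction_on F2 (\<lambda>k' k. \<Sum>i'\<in>F1. \<Sum>i\<in>F1. cnj (u i') * W (i',k') (i,k) * v i)"
    and tX: "trace_class X" and tY: "trace_class Y" and M: "M > 0" "trace_norm Y \<le> M"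
  shows "cmod (tr_prod (F1 \<times> F2) (tensor X Y) W) \<le> M * trace_norm X"
proof -
  define c where "c = (\<lambda>i' i. \<Sum>k\<in>F2. \<Sum>k'\<in>F2. Y k k' * W (i',k') (i,k))"
  have tensor_eq: "tr_prod (F1 \<times> F2) (tensor X Y) W = tr_prod F1 X c"
  proof -
    have "tr_prod (F1 \<times> F2) (tensor X Y) W
        = (\<Sum>i\<in>F1. \<Sum>k\<in>F2. \<Sum>i'\<in>F1. \<Sum>k'\<in>F2. X i i' * Y k k' * W (i',k') (i,k))"
      unfolding tr_prod_def tensor_def sum.cartesian_product' by simp
    also have "\<dots> = (\<Sum>i\<in>F1. \<Sum>i'\<in>F1. \<Sum>k\<in>F2. \<Sum>k'\<in>F2. X i i' * Y k k' * W (i',k') (i,k))"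
      by (rule sum.cong[OF refl], rule sum.swap)
    also have "\<dots> = tr_prod F1 X c"
      unfolding tr_prod_def c_def by (simp add: sum_distrib_left mult.assoc)
    finally show ?thesis .
  qed
  have bilinear_eq: "(\<Sum>i'\<in>F1. \<Sum>i\<in>F1. cnj (u i') * c i' i * v i)
      = tr_prod F2 Y (\<lambda>k' k. \<Sum>i'\<in>F1. \<Sum>i\<in>F1. cnj (u i') * W (i',k') (i,k) * v i)" for u v
  proof -
    have "(\<Sum>i'\<in>F1. \<Sum>i\<in>F1. cnj (u i') * c i' i * v i)
       = (\<Sum>i'\<in>F1. \<Sum>i\<in>F1. \<Sum>k\<in>F2. \<Sum>k'\<in>F2. Y k k' * (cnj (u i') * W (i',k') (i,k) * v i))"
      unfolding c_def by (simp add: sum_distrib_left sum_distrib_right mult_ac)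
    also have "\<dots> = (\<Sum>k\<in>F2. \<Sum>i'\<in>F1. \<Sum>i\<in>F1. \<Sum>k'\<in>F2. Y k k' * (cnj (u i') * W (i',k') (i,k) * v i))"
      by (subst sum.swap) (rule sum.cong[OF refl], rule sum.swap)
    also have "\<dots> = (\<Sum>k\<in>F2. \<Sum>k'\<in>F2. \<Sum>i'\<in>F1. \<Sum>i\<in>F1. Y k k' * (cnj (u i') * W (i',k') (i,k) * v i))"
      by (rule sum.cong[OF refl], subst sum.swap) (rule sum.cong[OF refl], rule sum.swap)
    also have "\<dots> = tr_prod F2 Y (\<lambda>k' k. \<Sum>i'\<in>F1. \<Sum>i\<in>F1. cnj (u i') * W (i',k') (i,k) * v i)"
      unfolding tr_prod_def by (simp add: sum_distrib_left)
    finally show ?thesis .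
  qed
  have "cmod (\<Sum>i'\<in>F1. \<Sum>i\<in>F1. cnj (u i') * c i' i * v i) \<le> M"
    if "sqnorm_on F1 u \<le> 1" "sqnorm_on F1 v \<le> 1" for u v
    unfolding bilinear_eq using norm_tr_prod_le_trace_norm[OF f2 compr[OF that] tY] M(2) by linarith
  then have op: "(\<Sum>i\<in>F1. (cmod (\<Sum>j\<in>F1. c i j * x j))^2) \<le> M^2 * (\<Sum>j\<in>F1. (cmod (x j))^2)" for x
    using op_bound_of_bilinear_bound[OF f1] M by simp
  have suppc: "c i j = 0" if "i \<notin> F1 \<or> j \<notin> F1" for i j
    unfolding c_def using suppW that by auto
  show ?thesis
    unfolding tensor_eq by (rule norm_tr_prod_le_op_bound[OF f1 suppc M(1) op tX]) auto
qed

lemma trace_class_tensor: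
  fixes X :: "'a mat" and Y :: "'b mat"
  assumes tX: "trace_class X" and tY: "trace_class Y"
  shows "trace_class (tensor X Y)"
proof (rule trace_class_and_trace_norm_le(1))
  fix F :: "('a \<times> 'b) set" and b assume fF: "finite F" and cb: "contraction_on F b"
  define F1 where "F1 = fst ` F"
  define F2 where "F2 = snd ` F"
  have f1: "finite F1" and f2: "finite F2"
    unfolding F1_def F2_def using fF by auto
  have sub: "F \<subseteq> F1 \<times> F2"
    unfolding F1_def F2_def by force
  have cb12: "contraction_on (F1 \<times> F2) b"
    by (rule contraction_on_mono[OF cb sub]) (use f1 f2 in simp)
  have supp: "b p q = 0" if "p \<notin> F \<or> q \<notin> F" for p q
    using cb that unfolding contraction_on_def by blast
  have "tr_prod F (tensor X Y) b = tr_prod (F1 \<times> F2) (tensor X Y) b"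
    unfolding tr_prod_def
    by (rule sum.mono_neutral_cong_left) (use f1 f2 sub supp in \<open>auto intro!: sum.mono_neutral_left\<close>)
  also have "cmod \<dots> \<le> (trace_norm Y + 1) * trace_norm X"
  proof (rule norm_tr_prod_tensor_le[OF f1 f2 _ _ tX tY])
    show "\<And>p q. p \<notin> F1 \<times> F2 \<or> q \<notin> F1 \<times> F2 \<Longrightarrow> b p q = 0"
      using cb12 unfolding contraction_on_def by blast
    show "\<And>u v. sqnorm_on F1 u \<le> 1 \<Longrightarrow> sqnorm_on F1 v \<le> 1 \<Longrightarrow>
       contraction_on F2 (\<lambda>k' k. \<Sum>i'\<in>F1. \<Sum>i\<in>F1. cnj (u i') * b (i',k') (i,k) * v i)"
      by (rule contraction_on_compression[OF f1 f2 cb12])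
    show "0 < trace_norm Y + 1" "trace_norm Y \<le> trace_norm Y + 1"
      using trace_norm_nonneg[OF tY] by auto
  qed
  finally show "cmod (tr_prod F (tensor X Y) b) \<le> (trace_norm Y + 1) * trace_norm X" .
qed

definition mat_unit :: "'i \<Rightarrow> 'i \<Rightarrow> 'i mat" where
  "mat_unit i j = (\<lambda>a c. if a = i \<and> c = j then 1 else 0)"

lemma trace_class_mat_unit: "trace_class (mat_unit i j)"
  by (rule trace_class_finite_support[of "{i,j}"]) (auto simp: mat_unit_def)

lemma tr_prod_mat_unit:
  assumes "finite F"
  shows "tr_prod F (mat_unit i j) b = (if i \<in> F \<and> j \<in> F then b j i else 0)"
proof -
  have "(\<Sum>l\<in>F. mat_unit i j k l * b l k) = (if k = i then (if j \<in> F then b j i else 0) else 0)" for k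
  proof (cases "k = i")
    case True
    then have "(\<Sum>l\<in>F. mat_unit i j k l * b l k) = (\<Sum>l\<in>F. if l = j then b j i else 0)"
      unfolding mat_unit_def by (intro sum.cong) auto
    then show ?thesis using assms True by simp
  qed (simp add: mat_unit_def)
  then show ?thesis
    unfolding tr_prod_def using assms by simp
qed

lemma trace_norm_mat_unit: "trace_norm (mat_unit i j) = 1"
proof (rule antisym)
  show "trace_norm (mat_unit i j) \<le> 1"
  proof (rule trace_class_and_trace_norm_le(2))
    fix F :: "'a set" and b assume "finite F" "contraction_on F b"
    then show "cmod (tr_prod F (mat_unit i j) b) \<le> 1"
      using contraction_on_norm_entry_le[of F b j i] by (simp add: tr_prod_mat_unit)
  qed
  have "contraction_on {i,j} (mat_unit j i)"
    unfolding contraction_on_def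
  proof (intro conjI allI impI)
    fix a c assume "a \<notin> {i,j} \<or> c \<notin> {i,j}"
    then show "mat_unit j i a c = 0" unfolding mat_unit_def by auto
  next
    fix x :: "'a \<Rightarrow> complex"
    have "(\<Sum>a\<in>{i,j}. (cmod (\<Sum>c\<in>{i,j}. mat_unit j i a c * x c))^2)
        = (\<Sum>a\<in>{i,j}. if a = j then (cmod (x i))^2 else 0)"
      unfolding mat_unit_def
      by (rule sum.cong[OF refl]) (auto simp: if_distrib[of "\<lambda>x. x * _"] cong: if_cong)
    also have "\<dots> \<le> (\<Sum>c\<in>{i,j}. (cmod (x c))^2)"
      by simp (rule member_le_sum; simp)
    finally show "(\<Sum>a\<in>{i,j}. (cmod (\<Sum>c\<in>{i,j}. mat_unit j i a c * x c))^2)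
        \<le> (\<Sum>c\<in>{i,j}. (cmod (x c))^2)" .
  qed
  then have "cmod (tr_prod {i,j} (mat_unit i j) (mat_unit j i)) \<le> trace_norm (mat_unit i j)"
    by (rule norm_tr_prod_le_trace_norm[rotated, OF _ trace_class_mat_unit]) simp
  moreover have "tr_prod {i,j} (mat_unit i j) (mat_unit j i) = 1"
    by (subst tr_prod_mat_unit) (simp_all add: mat_unit_def)
  ultimately show "1 \<le> trace_norm (mat_unit i j)" by simp
qed

lemma tensor_mat_unit:
  "tensor (mat_unit i j) (mat_unit k l) p q = (if p = (i,k) \<and> q = (j,l) then 1 else 0)"
  unfolding tensor_def mat_unit_def by (cases p; cases q) auto

definition graph_on :: "'a set \<Rightarrow> ('a \<Rightarrow> 'b) \<Rightarrow> ('a \<times> 'b) set" where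
  "graph_on F \<tau> = (\<lambda>i. (i, \<tau> i)) ` F"

lemma mem_graph_on: "p \<in> graph_on F \<tau> \<longleftrightarrow> fst p \<in> F \<and> snd p = \<tau> (fst p)"
  by (cases p) (auto simp: graph_on_def image_iff)

lemma graph_on_subset: "graph_on F \<tau> \<subseteq> F \<times> \<tau> ` F"
  unfolding graph_on_def by auto

lemma finite_graph_on: "finite F \<Longrightarrow> finite (graph_on F \<tau>)"
  unfolding graph_on_def by simp

lemma card_graph_on: "card (graph_on F \<tau>) = card F"
  unfolding graph_on_def by (rule card_image) (auto simp: inj_on_def)

lemma sum_indicator_graph_on:
  assumes "finite F"
  shows "(\<Sum>q\<in>F \<times> \<tau> ` F. if q \<in> graph_on F \<tau> then c else 0) = of_nat (card F) * c"
proof -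
  have "(\<Sum>q\<in>F \<times> \<tau> ` F. if q \<in> graph_on F \<tau> then c else 0) = (\<Sum>q\<in>graph_on F \<tau>. c)"
    using assms graph_on_subset finite_graph_on by (intro sum.mono_neutral_cong_right) auto
  then show ?thesis by (simp add: card_graph_on)
qed

lemma sum_graph_on_point:
  assumes "finite F"
  shows "(\<Sum>j\<in>F. if q = (j, \<tau> j) then c else 0) = (if q \<in> graph_on F \<tau> then c else 0)"
proof -
  have "(\<Sum>j\<in>F. if q = (j, \<tau> j) then c else 0)
      = (\<Sum>j\<in>F. if j = fst q then (if snd q = \<tau> (fst q) then c else 0) else 0)"
    by (intro sum.cong refl) (cases q, auto)
  then show ?thesis using assms by (simp add: mem_graph_on)
qed

text \<open>In matrix form \<open>\<rho> = |\<psi>\<rangle>\<langle>\<psi>|\<close> has entry \<open>1/n\<close> at \<open>(p, q)\<close> when both \<open>p\<close> and \<open>q\<close> lie on the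
  graph of \<open>\<tau>\<close>, and \<open>0\<close> elsewhere; \<open>entangled_witness F \<tau>\<close> is \<open>W = n \<rho>\<close>.\<close>

definition entangled_state :: "'a set \<Rightarrow> ('a \<Rightarrow> 'b) \<Rightarrow> ('a \<times> 'b) mat" where
  "entangled_state F \<tau> =
     (\<lambda>p q. if p \<in> graph_on F \<tau> \<and> q \<in> graph_on F \<tau> then 1 / of_nat (card F) else 0)"

definition entangled_witness :: "'a set \<Rightarrow> ('a \<Rightarrow> 'b) \<Rightarrow> ('a \<times> 'b) mat" where
  "entangled_witness F \<tau> = (\<lambda>p q. if p \<in> graph_on F \<tau> \<and> q \<in> graph_on F \<tau> then 1 else 0)"

context
  fixes F :: "'a set" and \<tau> :: "'a \<Rightarrow> 'b"
  assumes fin: "finite F" and ne: "F \<noteq> {}"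
begin

private lemma card_pos: "card F > 0"
  using fin ne by (simp add: card_gt_0_iff)

lemma trace_class_entangled_state: "trace_class (entangled_state F \<tau>)"
  by (rule trace_class_finite_support[OF finite_graph_on[OF fin]]) (auto simp: entangled_state_def)

lemma contraction_on_entangled_state: "contraction_on (F \<times> \<tau> ` F) (entangled_state F \<tau>)"
  unfolding contraction_on_def
proof (intro conjI allI impI)
  fix p q assume "p \<notin> F \<times> \<tau> ` F \<or> q \<notin> F \<times> \<tau> ` F"
  then show "entangled_state F \<tau> p q = 0"
    unfolding entangled_state_def using graph_on_subset[of F \<tau>] by auto
next
  fix x :: "'a \<times> 'b \<Rightarrow> complex"
  let ?G = "F \<times> \<tau> ` F" and ?S = "graph_on F \<tau>" and ?n = "card F"
  define s where "s = (\<Sum>q\<in>?S. x q)"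
  have image: "(\<Sum>q\<in>?G. entangled_state F \<tau> p q * x q) = (if p \<in> ?S then s / of_nat ?n else 0)" for p
  proof -
    have "(\<Sum>q\<in>?G. entangled_state F \<tau> p q * x q)
        = (\<Sum>q\<in>?G. if q \<in> ?S then (if p \<in> ?S then x q / of_nat ?n else 0) else 0)"
      unfolding entangled_state_def by (rule sum.cong) auto
    also have "\<dots> = (\<Sum>q\<in>?S. (if p \<in> ?S then x q / of_nat ?n else 0))"
      using fin graph_on_subset by (intro sum.mono_neutral_cong_left[symmetric]) auto
    finally show ?thesis
      unfolding s_def by (simp add: sum_divide_distrib)
  qed
  have "(\<Sum>p\<in>?G. (cmod (\<Sum>q\<in>?G. entangled_state F \<tau> p q * x q))^2)
      = (\<Sum>p\<in>?G. if p \<in> ?S then (cmod (s / of_nat ?n))^2 else 0)"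
    unfolding image by (rule sum.cong) auto
  also have "\<dots> = of_nat ?n * (cmod s)^2 / (of_nat ?n)^2"
    using sum_indicator_graph_on[OF fin, of \<tau> "(cmod (s / of_nat ?n))^2"]
    by (simp add: norm_divide power_divide)
  also have "\<dots> = (cmod s)^2 / of_nat ?n"
    using card_pos by (simp add: power2_eq_square)
  also have "\<dots> \<le> sqnorm_on ?S x"
  proof -
    have "(cmod s)^2 \<le> sqnorm_on ?S (\<lambda>_. 1) * sqnorm_on ?S x"
      unfolding s_def using cauchy_schwarz_complex_sum[OF finite_graph_on[OF fin], of "\<lambda>_. 1" x] by simp
    also have "sqnorm_on ?S (\<lambda>_. 1) = of_nat ?n"
      unfolding sqnorm_on_def by (simp add: card_graph_on)
    finally show ?thesis
      using card_pos by (simp add: divide_le_eq mult.commute)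
  qed
  also have "\<dots> \<le> (\<Sum>q\<in>?G. (cmod (x q))^2)"
    unfolding sqnorm_on_def by (rule sum_mono2) (use fin graph_on_subset in auto)
  finally show "(\<Sum>p\<in>?G. (cmod (\<Sum>q\<in>?G. entangled_state F \<tau> p q * x q))^2) \<le> (\<Sum>q\<in>?G. (cmod (x q))^2)" .
qed

lemma density_entangled_state: "density (entangled_state F \<tau>)"
  unfolding density_def
proof (intro conjI allI impI)
  show "trace_class (entangled_state F \<tau>)"
    by (rule trace_class_entangled_state)
next
  fix G :: "('a \<times> 'b) set" and x :: "'a \<times> 'b \<Rightarrow> complex"
  let ?S = "graph_on F \<tau>"
  define s where "s = (\<Sum>j\<in>G. if j \<in> ?S then x j else 0)"
  have "(\<Sum>i\<in>G. \<Sum>j\<in>G. cnj (x i) * entangled_state F \<tau> i j * x j)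
      = (\<Sum>i\<in>G. (if i \<in> ?S then cnj (x i) else 0) * (s / of_nat (card F)))"
    unfolding entangled_state_def s_def
    by (rule sum.cong[OF refl]) (auto simp: sum_distrib_left sum_divide_distrib intro!: sum.cong)
  also have "\<dots> = cnj s * s / of_nat (card F)"
  proof -
    have "cnj s = (\<Sum>i\<in>G. if i \<in> ?S then cnj (x i) else 0)"
      unfolding s_def cnj_sum by (rule sum.cong) auto
    then show ?thesis by (simp add: sum_distrib_right sum_divide_distrib)
  qed
  also have "\<dots> = complex_of_real ((cmod s)^2 / real (card F))"
    using complex_norm_square[of s] by (simp add: mult.commute)
  finally have quadratic_form: "(\<Sum>i\<in>G. \<Sum>j\<in>G. cnj (x i) * entangled_state F \<tau> i j * x j)
      = complex_of_real ((cmod s)^2 / real (card F))" .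
  show "Im (\<Sum>i\<in>G. \<Sum>j\<in>G. cnj (x i) * entangled_state F \<tau> i j * x j) = 0"
       "0 \<le> Re (\<Sum>i\<in>G. \<Sum>j\<in>G. cnj (x i) * entangled_state F \<tau> i j * x j)"
    unfolding quadratic_form by simp_all
next
  have "(\<Sum>p\<in>graph_on F \<tau>. entangled_state F \<tau> p p) = 1"
    using card_pos by (simp add: entangled_state_def card_graph_on)
  then show "((\<lambda>p. entangled_state F \<tau> p p) has_sum 1) UNIV"
    by (intro has_sum_finite_neutralI[OF finite_graph_on[OF fin]]) (auto simp: entangled_state_def)
qed

lemma std_decomp_entangled_state: "\<exists>r X Y. std_decomp (entangled_state F \<tau>) r X Y"
proof -
  let ?n = "card F"
  define m where "m = card (F \<times> F)"
  obtain e where e: "bij_betw e {0..<m} (F \<times> F)"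
    unfolding m_def using ex_bij_betw_nat_finite[of "F \<times> F"] fin by auto
  define r where "r = (\<lambda>k. if k < m then 1 / real ?n else 0)"
  define X where "X = (\<lambda>k. mat_unit (fst (e k)) (snd (e k)))"
  define Y where "Y = (\<lambda>k. mat_unit (\<tau> (fst (e k))) (\<tau> (snd (e k))))"
  have partial_sum: "(\<Sum>k<N. complex_of_real (r k) * tensor (X k) (Y k) p q) = entangled_state F \<tau> p q"
    if "N \<ge> m" for N p q
  proof -
    have "(\<Sum>k<N. complex_of_real (r k) * tensor (X k) (Y k) p q)
        = (\<Sum>k\<in>{0..<m}. complex_of_real (r k) * tensor (X k) (Y k) p q)"
      by (rule sum.mono_neutral_right) (use that in \<open>auto simp: r_def\<close>)
    also have "\<dots> = (\<Sum>k\<in>{0..<m}. complex_of_real (1 / real ?n) *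
             (\<lambda>(i,j). tensor (mat_unit i j) (mat_unit (\<tau> i) (\<tau> j)) p q) (e k))"
      unfolding r_def X_def Y_def by (intro sum.cong refl) (auto simp: case_prod_beta)
    also have "\<dots> = complex_of_real (1 / real ?n) *
        (\<Sum>(i,j)\<in>F \<times> F. tensor (mat_unit i j) (mat_unit (\<tau> i) (\<tau> j)) p q)"
      unfolding sum_distrib_left[symmetric] by (simp add: sum.reindex_bij_betw[OF e])
    also have "(\<Sum>(i,j)\<in>F \<times> F. tensor (mat_unit i j) (mat_unit (\<tau> i) (\<tau> j)) p q)
        = (\<Sum>i\<in>F. \<Sum>j\<in>F. if p = (i, \<tau> i) then (if q = (j, \<tau> j) then 1 else 0) else 0)"
      unfolding sum.cartesian_product' tensor_mat_unit by (intro sum.cong refl) auto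
    also have "\<dots> = (\<Sum>i\<in>F. if p = (i, \<tau> i) then (if q \<in> graph_on F \<tau> then 1 else 0) else 0)"
      by (intro sum.cong refl) (auto simp: sum_graph_on_point[OF fin])
    also have "\<dots> = (if p \<in> graph_on F \<tau> then (if q \<in> graph_on F \<tau> then 1 else 0) else 0)"
      by (rule sum_graph_on_point[OF fin])
    finally show ?thesis
      unfolding entangled_state_def by auto
  qed
  have "std_decomp (entangled_state F \<tau>) r X Y"
    unfolding std_decomp_def
  proof (intro conjI allI)
    show "0 \<le> r k" for k
      unfolding r_def by auto
    show "summable r"
      by (rule summable_finite[of "{..<m}"]) (auto simp: r_def)
    show "trace_class (X k)" "trace_class (Y k)" "trace_norm (X k) * trace_norm (Y k) = 1" for k
      unfolding X_def Y_def by (simp_all add: trace_class_mat_unit trace_norm_mat_unit)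
    have "\<forall>\<^sub>F N in sequentially. trace_norm (\<lambda>p q. entangled_state F \<tau> p q
        - (\<Sum>k<N. complex_of_real (r k) * tensor (X k) (Y k) p q)) = 0"
      unfolding eventually_sequentially by (rule exI[of _ m]) (simp add: partial_sum trace_norm_zero)
    then show "(\<lambda>N. trace_norm (\<lambda>p q. entangled_state F \<tau> p q
        - (\<Sum>k<N. complex_of_real (r k) * tensor (X k) (Y k) p q))) \<longlonglongrightarrow> 0"
      by (rule tendsto_eventually)
  qed
  then show ?thesis by blast
qed

lemma entangled_state_in_cross_states: "entangled_state F \<tau> \<in> cross_states"
  unfolding cross_states_def cross_trace_class_def
  using density_entangled_state trace_class_entangled_state std_decomp_entangled_state by blast

lemma entangled_witness_eq: "entangled_witness F \<tau> = (\<lambda>p q. of_nat (card F) * entangled_state F \<tau> p q)"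
  using card_pos unfolding entangled_witness_def entangled_state_def by (auto simp: fun_eq_iff)

lemma tr_prod_entangled_state_witness:
  "tr_prod (F \<times> \<tau> ` F) (entangled_state F \<tau>) (entangled_witness F \<tau>) = of_nat (card F)"
proof -
  let ?G = "F \<times> \<tau> ` F" and ?S = "graph_on F \<tau>"
  have "tr_prod ?G (entangled_state F \<tau>) (entangled_witness F \<tau>)
      = (\<Sum>p\<in>?G. \<Sum>q\<in>?G. if q \<in> ?S then (if p \<in> ?S then 1 / of_nat (card F) else 0) else 0)"
    unfolding tr_prod_def entangled_state_def entangled_witness_def by (intro sum.cong refl) auto
  also have "\<dots> = (\<Sum>p\<in>?G. of_nat (card F) * (if p \<in> ?S then 1 / of_nat (card F) else 0))"
    by (intro sum.cong refl) (rule sum_indicator_graph_on[OF fin])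
  also have "\<dots> = (\<Sum>p\<in>?G. if p \<in> ?S then 1 else 0)"
    using card_pos by (intro sum.cong refl) auto
  also have "\<dots> = of_nat (card F)"
    using sum_indicator_graph_on[OF fin, of \<tau> 1] by simp
  finally show ?thesis .
qed

lemma norm_tr_prod_entangled_witness_le:
  assumes "trace_class A"
  shows "cmod (tr_prod (F \<times> \<tau> ` F) A (entangled_witness F \<tau>)) \<le> card F * trace_norm A"
  using norm_tr_prod_le_trace_norm[OF _ contraction_on_entangled_state assms] fin
  unfolding entangled_witness_eq tr_prod_scale_right by (simp add: norm_mult mult_left_mono)

lemma entangled_witness_support:
  "p \<notin> F \<times> \<tau> ` F \<or> q \<notin> F \<times> \<tau> ` F \<Longrightarrow> entangled_witness F \<tau> p q = 0"
  unfolding entangled_witness_def using graph_on_subset[of F \<tau>] by auto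

context
  assumes inj: "inj_on \<tau> F"
begin

lemma entangled_witness_on_graph:
  "\<lbrakk>i' \<in> F; i \<in> F; j' \<in> F; j \<in> F\<rbrakk> \<Longrightarrow>
     entangled_witness F \<tau> (i', \<tau> j') (i, \<tau> j) = (if i' = j' \<and> i = j then 1 else 0)"
  unfolding entangled_witness_def using inj by (auto simp: mem_graph_on inj_on_def)

text \<open>Compressing \<open>W\<close> by \<open>(u, v)\<close> leaves the rank-one matrix with entry \<open>cnj (u j') * v j\<close> at
  \<open>(\<tau> j', \<tau> j)\<close>, whose operator norm is \<open>|u| |v|\<close>.\<close>

lemma contraction_on_entangled_witness_compression:
  assumes nu: "sqnorm_on F u \<le> 1" and nv: "sqnorm_on F v \<le> 1"
  shows "contraction_on (\<tau> ` F)
           (\<lambda>k' k. \<Sum>i'\<in>F. \<Sum>i\<in>F. cnj (u i') * entangled_witness F \<tau> (i',k') (i,k) * v i)"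
  unfolding contraction_on_def
proof (intro conjI allI impI)
  fix k' k assume "k' \<notin> \<tau> ` F \<or> k \<notin> \<tau> ` F"
  then have "entangled_witness F \<tau> (i',k') (i,k) = 0" for i' i
    by (intro entangled_witness_support) auto
  then show "(\<Sum>i'\<in>F. \<Sum>i\<in>F. cnj (u i') * entangled_witness F \<tau> (i',k') (i,k) * v i) = 0"
    by simp
next
  fix x :: "'b \<Rightarrow> complex"
  define d where "d = (\<lambda>k' k. \<Sum>i'\<in>F. \<Sum>i\<in>F. cnj (u i') * entangled_witness F \<tau> (i',k') (i,k) * v i)"
  have d_graph: "d (\<tau> j') (\<tau> j) = cnj (u j') * v j" if "j' \<in> F" "j \<in> F" for j' j
  proof -
    have "d (\<tau> j') (\<tau> j) = (\<Sum>i'\<in>F. if i' = j' then (\<Sum>i\<in>F. if i = j then cnj (u i') * v i else 0) else 0)"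
      unfolding d_def by (intro sum.cong refl) (auto simp: entangled_witness_on_graph that intro!: sum.cong)
    then show ?thesis using fin that by simp
  qed
  define t where "t = (\<Sum>j\<in>F. v j * x (\<tau> j))"
  have "(\<Sum>k'\<in>\<tau> ` F. (cmod (\<Sum>k\<in>\<tau> ` F. d k' k * x k))^2)
       = (\<Sum>j'\<in>F. (cmod (\<Sum>j\<in>F. d (\<tau> j') (\<tau> j) * x (\<tau> j)))^2)"
    by (simp add: sum.reindex[OF inj])
  also have "\<dots> = (\<Sum>j'\<in>F. (cmod (cnj (u j') * t))^2)"
    unfolding t_def by (intro sum.cong refl) (auto simp: d_graph sum_distrib_left mult.assoc intro!: sum.cong)
  also have "\<dots> = sqnorm_on F u * (cmod t)^2"
    unfolding sqnorm_on_def by (simp add: norm_mult power_mult_distrib sum_distrib_right)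
  also have "\<dots> \<le> (cmod t)^2"
    using nu sqnorm_on_nonneg[of F u] by (simp add: mult_left_le_one_le)
  also have "\<dots> \<le> sqnorm_on F v * sqnorm_on F (\<lambda>j. x (\<tau> j))"
    unfolding t_def by (rule cauchy_schwarz_complex_sum[OF fin])
  also have "\<dots> \<le> sqnorm_on F (\<lambda>j. x (\<tau> j))"
    using nv sqnorm_on_nonneg[of F v] sqnorm_on_nonneg[of F "\<lambda>j. x (\<tau> j)"]
    by (simp add: mult_left_le_one_le)
  also have "\<dots> = (\<Sum>k\<in>\<tau> ` F. (cmod (x k))^2)"
    unfolding sqnorm_on_def by (simp add: sum.reindex[OF inj])
  finally show "(\<Sum>k'\<in>\<tau> ` F. (cmod (\<Sum>k\<in>\<tau> ` F.
      (\<Sum>i'\<in>F. \<Sum>i\<in>F. cnj (u i') * entangled_witness F \<tau> (i',k') (i,k) * v i) * x k))^2)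
      \<le> (\<Sum>k\<in>\<tau> ` F. (cmod (x k))^2)"
    unfolding d_def .
qed

lemma norm_tr_prod_tensor_entangled_witness_le:
  assumes "trace_class X" "trace_class Y" "trace_norm Y > 0"
  shows "cmod (tr_prod (F \<times> \<tau> ` F) (tensor X Y) (entangled_witness F \<tau>)) \<le> trace_norm X * trace_norm Y"
proof -
  have "cmod (tr_prod (F \<times> \<tau> ` F) (tensor X Y) (entangled_witness F \<tau>)) \<le> trace_norm Y * trace_norm X"
    by (rule norm_tr_prod_tensor_le[OF fin finite_imageI[OF fin] entangled_witness_support
          contraction_on_entangled_witness_compression assms order_refl])
  then show ?thesis by (simp add: mult.commute)
qed

lemma card_le_std_decomp_sum:
  assumes "std_decomp (entangled_state F \<tau>) r X Y"
  shows "real (card F) \<le> suminf r"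
proof -
  let ?G = "F \<times> \<tau> ` F" and ?W = "entangled_witness F \<tau>"
  have r0: "\<And>k. 0 \<le> r k" and sr: "summable r"
    and tcX: "\<And>k. trace_class (X k)" and tcY: "\<And>k. trace_class (Y k)"
    and unit: "\<And>k. trace_norm (X k) * trace_norm (Y k) = 1"
    and lim: "(\<lambda>N. trace_norm (\<lambda>p q. entangled_state F \<tau> p q
                - (\<Sum>k<N. complex_of_real (r k) * tensor (X k) (Y k) p q))) \<longlonglongrightarrow> 0"
    using assms unfolding std_decomp_def by auto
  define A where "A = (\<lambda>N p q. entangled_state F \<tau> p q
                          - (\<Sum>k<N. complex_of_real (r k) * tensor (X k) (Y k) p q))"
  have tcA: "trace_class (A N)" for N
    unfolding A_def
    by (rule trace_class_diff[OF trace_class_entangled_state trace_class_sum[OF trace_class_tensor[OF tcX tcY]]])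
  have tensor_le: "cmod (tr_prod ?G (tensor (X k) (Y k)) ?W) \<le> 1" for k
  proof -
    have "trace_norm (Y k) \<noteq> 0"
      using unit[of k] by auto
    then have "trace_norm (Y k) > 0"
      using trace_norm_nonneg[OF tcY] by (simp add: order_less_le)
    then have "cmod (tr_prod ?G (tensor (X k) (Y k)) ?W) \<le> trace_norm (X k) * trace_norm (Y k)"
      by (rule norm_tr_prod_tensor_entangled_witness_le[OF tcX tcY])
    then show ?thesis
      using unit[of k] by simp
  qed
  have bound: "real (card F) \<le> card F * trace_norm (A N) + suminf r" for N
  proof -
    have split: "tr_prod ?G (entangled_state F \<tau>) ?W
        = tr_prod ?G (A N) ?W + (\<Sum>k<N. complex_of_real (r k) * tr_prod ?G (tensor (X k) (Y k)) ?W)"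
      unfolding A_def tr_prod_diff tr_prod_sum tr_prod_scale_left by simp
    have "real (card F) = cmod (tr_prod ?G (entangled_state F \<tau>) ?W)"
      by (simp add: tr_prod_entangled_state_witness)
    also have "\<dots> \<le> cmod (tr_prod ?G (A N) ?W)
        + cmod (\<Sum>k<N. complex_of_real (r k) * tr_prod ?G (tensor (X k) (Y k)) ?W)"
      unfolding split by (rule norm_triangle_ineq)
    also have "\<dots> \<le> cmod (tr_prod ?G (A N) ?W)
        + (\<Sum>k<N. cmod (complex_of_real (r k) * tr_prod ?G (tensor (X k) (Y k)) ?W))"
      by (intro add_left_mono norm_sum)
    also have "\<dots> \<le> card F * trace_norm (A N) + (\<Sum>k<N. r k)"
    proof (intro add_mono sum_mono)
      show "cmod (tr_prod ?G (A N) ?W) \<le> card F * trace_norm (A N)"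
        by (rule norm_tr_prod_entangled_witness_le[OF tcA])
      show "cmod (complex_of_real (r k) * tr_prod ?G (tensor (X k) (Y k)) ?W) \<le> r k" for k
        using tensor_le[of k] r0[of k] by (simp add: norm_mult mult_left_le)
    qed
    also have "\<dots> \<le> card F * trace_norm (A N) + suminf r"
      using sum_le_suminf[OF sr, of "{..<N}"] r0 by simp
    finally show ?thesis .
  qed
  have "(\<lambda>N. trace_norm (A N)) \<longlonglongrightarrow> 0"
    using lim unfolding A_def .
  then have "(\<lambda>N. real (card F) * trace_norm (A N) + suminf r) \<longlonglongrightarrow> real (card F) * 0 + suminf r"
    by (intro tendsto_add tendsto_mult_left tendsto_const)
  then show ?thesis
    using bound by (intro LIMSEQ_le_const) auto
qed

lemma card_le_proj_norm_entangled_state: "ereal (real (card F)) \<le> proj_norm (entangled_state F \<tau>)"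
  unfolding proj_norm_def by (rule Inf_greatest) (auto intro: card_le_std_decomp_sum)

end

end

lemma ex_cross_state_proj_norm_ge:
  assumes "infinite (UNIV :: 'a set)" and "infinite (UNIV :: 'b set)"
  shows "\<exists>D \<in> (cross_states :: ('a \<times> 'b) mat set). ereal (real n) \<le> proj_norm D"
proof -
  obtain F :: "'a set" where F: "finite F" "card F = Suc n"
    using infinite_arbitrarily_large[OF assms(1)] by blast
  obtain F' :: "'b set" where F': "finite F'" "card F' = Suc n"
    using infinite_arbitrarily_large[OF assms(2)] by blast
  obtain \<tau> where "bij_betw \<tau> F F'"
    using finite_same_card_bij[OF F(1) F'(1)] F F' by auto
  then have inj: "inj_on \<tau> F"
    by (simp add: bij_betw_def)
  have ne: "F \<noteq> {}"
    using F by auto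
  have "ereal (real n) \<le> ereal (real (card F))"
    using F(2) by simp
  also have "\<dots> \<le> proj_norm (entangled_state F \<tau>)"
    by (rule card_le_proj_norm_entangled_state[OF F(1) ne inj])
  finally have "ereal (real n) \<le> proj_norm (entangled_state F \<tau>)" .
  then show ?thesis
    using entangled_state_in_cross_states[OF F(1) ne] by blast
qed

lemma proj_norm_le_proj_norm_sa: "proj_norm D \<le> proj_norm_sa D"
  unfolding proj_norm_def proj_norm_sa_def by (rule Inf_superset_mono) blast

theorem corollary3p29:
  assumes "infinite (UNIV :: 'a::countable set)"
      and "infinite (UNIV :: 'b::countable set)"
  shows "(SUP D \<in> (cross_states :: ('a \<times> 'b) mat set). proj_norm D) = \<infinity> \<and>
         (SUP D \<in> (cross_states :: ('a \<times> 'b) mat set). proj_norm_sa D) = \<infinity>"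
proof
  show proj_unbounded: "(SUP D \<in> (cross_states :: ('a \<times> 'b) mat set). proj_norm D) = \<infinity>"
    using ex_cross_state_proj_norm_ge[OF assms] by (rule SUP_PInfty)
  have "(SUP D \<in> (cross_states :: ('a \<times> 'b) mat set). proj_norm D)
      \<le> (SUP D \<in> (cross_states :: ('a \<times> 'b) mat set). proj_norm_sa D)"
    by (rule SUP_mono) (use proj_norm_le_proj_norm_sa in blast)
  then show "(SUP D \<in> (cross_states :: ('a \<times> 'b) mat set). proj_norm_sa D) = \<infinity>"
    unfolding proj_unbounded by simp
qed

end
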